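(* Let $G>0$, $T>0$, and let $F\colon\mathbb R\to\mathbb R^2$ be $T$-periodic and of class $C^1$. There exists $a_0\in(0,1)$ such that for every $a$ with $a_0\le a<1$, the function $m_a(t,x,p)=\tfrac12|x|^2-\tfrac12a^2$ is a curvature bound function for $v_\lambda$ for all $\lambda\in[0,1]$.
   Context: Let $\Omega=\{(x,p)\in\mathbb R^2\times\mathbb R^2:|x|<1\}$. For $\lambda\in[0,1]$, $v_\lambda\colon\mathbb R\times\Omega\to\mathbb R\times\mathbb R^2\times\mathbb R^2$ is \[ v_\lambda(t,x,p)=\Big(1,\ p,\ \Big(G\sqrt{1-|x|^2}-\tfrac{(x^Tp)^2}{1-|x|^2}-|p|^2\Big)x+\lambda\big((x^TF(t))x-F(t)\big)\Big), \] the right-hand side of $\dot t=1$, $\dot x=p$, $\dot p=\dots$. A $C^2$ function $e$ on an open subset $W$ of $\mathbb R\times\Omega$ is a curvature bound function for $v$ if for every $z\in W$ with $e(z)=0$: $De(z)v(z)=0$ implies $v(z)^TD^2e(z)v(z)+De(z)Dv(z)v(z)>0$, where $De$ is the derivative (row vector) with respect to all variables $(t,x,p)$, $D^2e$ the Hessian and $Dv$ the Jacobian matrix. Here $m_a$ is considered on all of $\mathbb R\times\Omega$. *)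

theory Defs
  imports "HOL-Analysis.Analysis"
begin

type_synonym state = "real \<times> (real^2) \<times> (real^2)"

definition curvature_bound_function ::
  "'a::euclidean_space set \<Rightarrow> ('a \<Rightarrow> real) \<Rightarrow> ('a \<Rightarrow> 'a) \<Rightarrow> bool" where
  "curvature_bound_function W e v \<longleftrightarrow> open W \<and>
     (\<exists>D1 D2 Dv.
        (\<forall>z\<in>W. (e has_derivative blinfun_apply (D1 z)) (at z)) \<and>
        (\<forall>z\<in>W. (D1 has_derivative blinfun_apply (D2 z)) (at z)) \<and>
        continuous_on W D2 \<and>
        (\<forall>z\<in>W. (v has_derivative Dv z) (at z)) \<and>
        (\<forall>z\<in>W. e z = 0 \<longrightarrow> D1 z (v z) = 0 \<longrightarrow>
            D2 z (v z) (v z) + D1 z (Dv z (v z)) > 0))"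

definition Omega :: "state set" where
  "Omega = {(t, x, p). norm x < 1}"

definition vfield :: "real \<Rightarrow> (real \<Rightarrow> real^2) \<Rightarrow> real \<Rightarrow> state \<Rightarrow> state" where
  "vfield G F l z = (case z of (t, x, p) \<Rightarrow>
     (1, p, (G * sqrt (1 - (norm x)\<^sup>2) - (x \<bullet> p)\<^sup>2 / (1 - (norm x)\<^sup>2) - (norm p)\<^sup>2) *\<^sub>R x
            + l *\<^sub>R ((x \<bullet> F t) *\<^sub>R x - F t)))"

definition m_fun :: "real \<Rightarrow> state \<Rightarrow> real" where
  "m_fun a z = (case z of (t, x, p) \<Rightarrow> (norm x)\<^sup>2 / 2 - a\<^sup>2 / 2)"

end

theory Submission
  imports Defs
begin

text \<open>The zero set of \<open>m_a\<close> is the cylinder \<open>|x| = a\<close>, and \<open>Dm_a v = x \<bullet> p\<close> vanishes exactly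
  when the velocity is tangent to it. Since \<open>m_a\<close> is quadratic in \<open>x\<close> and \<open>\<dot>x = p\<close>, the second-order
  quantity is \<open>|p|\<^sup>2 + x \<bullet> \<dot>p\<close>, which on the tangent set factors as
  \<open>s (s |p|\<^sup>2 + G a\<^sup>2 - \<lambda> s x \<bullet> F)\<close> with \<open>s = sqrt (1 - a\<^sup>2)\<close>. A continuous periodic \<open>F\<close> is bounded
  by some \<open>M\<close>,
  and \<open>s M < G a\<^sup>2\<close> as soon as \<open>a\<close> is close enough to \<open>1\<close>.\<close>

lemma periodic_int_shift:
  assumes per: "\<And>t. f (t + T) = f t"
  shows "f (t + of_int k * T) = f t"
proof (induction k rule: int_induct[where k = 0])
  case base then show ?case by simp
next
  case (step1 k) then show ?case using per[of "t + of_int k * T"] by (simp add: algebra_simps)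
next
  case (step2 k) then show ?case using per[of "t + of_int (k - 1) * T"] by (simp add: algebra_simps)
qed

lemma periodic_range_eq:
  fixes f :: "real \<Rightarrow> 'a"
  assumes "T > 0" and "\<And>t. f (t + T) = f t"
  shows "range f = f ` {0..T}"
proof -
  have "f t \<in> f ` {0..T}" for t
  proof
    define k where "k = \<lfloor>t / T\<rfloor>"
    show "t - of_int k * T \<in> {0..T}"
      using assms(1) floor_divide_lower[of T t] floor_divide_upper[of T t]
      by (auto simp: k_def algebra_simps)
    show "f t = f (t - of_int k * T)"
      using periodic_int_shift[of f T "t - of_int k * T" k] assms(2) by simp
  qed
  then show ?thesis by blast
qed

lemma periodic_continuous_bounded:
  fixes f :: "real \<Rightarrow> 'a::metric_space"
  assumes "T > 0" and "\<And>t. f (t + T) = f t" and "continuous_on UNIV f"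
  shows "bounded (range f)"
  unfolding periodic_range_eq[of T f, OF assms(1,2)]
  by (intro compact_imp_bounded compact_continuous_image continuous_on_subset[OF assms(3)]) auto

lemma eventually_at_left_one_threshold:
  assumes "eventually P (at_left (1::real))"
  shows "\<exists>a0\<in>{0<..<1}. \<forall>a. a0 \<le> a \<and> a < 1 \<longrightarrow> P a"
proof -
  obtain b where "b < 1" and "\<And>y. b < y \<Longrightarrow> y < 1 \<Longrightarrow> P y"
    using assms unfolding eventually_at_left_field by blast
  then show ?thesis
    by (intro bexI[of _ "(max b 0 + 1) / 2"]) auto
qed

lemma curvature_threshold:
  fixes G M :: real
  assumes "G > 0"
  shows "\<exists>a0\<in>{0<..<1}. \<forall>a. a0 \<le> a \<and> a < 1 \<longrightarrow> sqrt (1 - a\<^sup>2) * M < G * a\<^sup>2"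
proof (rule eventually_at_left_one_threshold)
  have "((\<lambda>a. sqrt (1 - a\<^sup>2) * M - G * a\<^sup>2) \<longlongrightarrow> sqrt (1 - 1\<^sup>2) * M - G * 1\<^sup>2) (at_left 1)"
    by (intro tendsto_intros)
  moreover have "sqrt (1 - 1\<^sup>2) * M - G * 1\<^sup>2 < 0"
    using assms by simp
  ultimately have "eventually (\<lambda>a. sqrt (1 - a\<^sup>2) * M - G * a\<^sup>2 < 0) (at_left 1)"
    by (rule order_tendstoD)
  then show "eventually (\<lambda>a. sqrt (1 - a\<^sup>2) * M < G * a\<^sup>2) (at_left 1)"
    by (rule eventually_mono) simp
qed

lemma curvature_bound_function_quadraticI:
  fixes b :: "'a::euclidean_space \<Rightarrow> 'a \<Rightarrow> real"
  assumes b: "bounded_bilinear b" and sym: "\<And>z w. b z w = b w z"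
    and "open W"
    and Dv: "\<And>z. z \<in> W \<Longrightarrow> (v has_derivative Dv z) (at z)"
    and pos: "\<And>z. z \<in> W \<Longrightarrow> b z z / 2 = c \<Longrightarrow> b z (v z) = 0 \<Longrightarrow>
                 b (v z) (v z) + b z (Dv z (v z)) > 0"
  shows "curvature_bound_function W (\<lambda>z. b z z / 2 - c) v"
proof -
  interpret b: bounded_bilinear b by (fact b)
  define D1 where "D1 = b.prod_right"
  have D1_linear: "bounded_linear D1"
    unfolding D1_def by (fact b.bounded_linear_prod_right)
  have D1_apply: "D1 z w = b z w" for z w
    by (simp add: D1_def)
  have "((\<lambda>z. b z z / 2 - c) has_derivative D1 z) (at z)" for z
  proof -
    have "((\<lambda>z. b z z / 2 - c) has_derivative (\<lambda>h. (b z h + b h z) / 2)) (at z)"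
      by (auto intro!: derivative_eq_intros b.FDERIV)
    moreover have "(\<lambda>h. (b z h + b h z) / 2) = D1 z"
      by (auto simp: D1_apply sym)
    ultimately show ?thesis by simp
  qed
  moreover have "(D1 has_derivative Blinfun D1) (at z)" for z
    using D1_linear by (simp add: bounded_linear_Blinfun_apply bounded_linear_imp_has_derivative)
  ultimately show ?thesis
    unfolding curvature_bound_function_def
    using \<open>open W\<close> Dv pos
    by (intro conjI exI[of _ D1] exI[of _ "\<lambda>_. Blinfun D1"] exI[of _ Dv])
       (auto simp: bounded_linear_Blinfun_apply[OF D1_linear] D1_apply)
qed

lemma tangential_curvature_pos:
  fixes x p f :: "'a::real_inner"
  assumes "norm x = a" "0 < a" "a < 1" "x \<bullet> p = 0" "0 \<le> l" "l \<le> 1" "norm f \<le> M"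
    and "sqrt (1 - a\<^sup>2) * M < G * a\<^sup>2"
  shows "(norm p)\<^sup>2 + x \<bullet> ((G * sqrt (1 - (norm x)\<^sup>2) - (x \<bullet> p)\<^sup>2 / (1 - (norm x)\<^sup>2) - (norm p)\<^sup>2) *\<^sub>R x
            + l *\<^sub>R ((x \<bullet> f) *\<^sub>R x - f)) > 0"
proof -
  define s where "s = sqrt (1 - a\<^sup>2)"
  have "a\<^sup>2 < 1" using assms(2,3) by (simp add: power_less_one_iff)
  then have s: "s > 0" "a\<^sup>2 = 1 - s\<^sup>2" by (simp_all add: s_def)
  have "\<bar>x \<bullet> f\<bar> \<le> norm x * norm f" by (rule Cauchy_Schwarz_ineq2)
  also have "\<dots> \<le> M"
    using assms(1,3,7) by (metis mult_left_le_one_le norm_ge_zero order.trans less_imp_le)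
  finally have "l * (x \<bullet> f) \<le> M"
    using assms(5,6) by (smt (verit) mult_left_le_one_le mult_left_mono)
  then have "s * (l * (x \<bullet> f)) \<le> s * M"
    using s(1) by simp
  also have "\<dots> < G * a\<^sup>2"
    using assms(8) by (simp add: s_def mult.commute)
  also have "\<dots> \<le> (norm p)\<^sup>2 * s + G * a\<^sup>2"
    using s(1) by simp
  finally have bound: "s * (l * (x \<bullet> f)) < (norm p)\<^sup>2 * s + G * a\<^sup>2" .
  have "x \<bullet> x = a\<^sup>2" using assms(1) power2_norm_eq_inner[of x] by simp
  then have "(norm p)\<^sup>2 + x \<bullet> ((G * sqrt (1 - (norm x)\<^sup>2) - (x \<bullet> p)\<^sup>2 / (1 - (norm x)\<^sup>2) - (norm p)\<^sup>2) *\<^sub>R x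
            + l *\<^sub>R ((x \<bullet> f) *\<^sub>R x - f))
     = (norm p)\<^sup>2 + (G * s - (norm p)\<^sup>2) * a\<^sup>2 + l * ((x \<bullet> f) * a\<^sup>2 - x \<bullet> f)"
    using assms(1,4) by (simp add: s_def inner_add_right inner_diff_right algebra_simps)
  also have "\<dots> = s * ((norm p)\<^sup>2 * s + G * a\<^sup>2 - s * (l * (x \<bullet> f)))"
    unfolding s(2) by (simp add: algebra_simps power2_eq_square)
  also have "\<dots> > 0" using s(1) bound by simp
  finally show ?thesis .
qed

lemma open_Omega: "open Omega"
proof -
  have "open {z :: state. norm (fst (snd z)) < 1}"
    by (intro open_Collect_less continuous_intros)
  moreover have "Omega = {z. norm (fst (snd z)) < 1}" by (auto simp: Omega_def)
  ultimately show ?thesis by simp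
qed

lemma vfield_differentiable:
  fixes F :: "real \<Rightarrow> real^2"
  assumes "\<And>t. F differentiable (at t)" and "z \<in> Omega"
  shows "vfield G F l differentiable (at z)"
proof -
  obtain F' where F': "\<And>t. (F has_derivative F' t) (at t)"
    using assms(1) unfolding differentiable_def by metis
  have F: "((\<lambda>z. F (fst z)) has_derivative (\<lambda>h. F' (fst w) (fst h))) (at w)" for w :: state
    using has_derivative_compose[OF has_derivative_fst[OF has_derivative_ident] F'] by blast
  obtain t x p where z: "z = (t, x, p)" by (cases z)
  have "x \<bullet> x < 1" using assms(2) by (simp add: z Omega_def abs_square_less_1 flip: power2_norm_eq_inner)
  moreover have "vfield G F l = (\<lambda>(t, x, p). (1, p, (G * sqrt (1 - x \<bullet> x) - (x \<bullet> p)\<^sup>2 / (1 - x \<bullet> x)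
        - p \<bullet> p) *\<^sub>R x + l *\<^sub>R ((x \<bullet> F t) *\<^sub>R x - F t)))"
    by (auto simp: vfield_def fun_eq_iff power2_norm_eq_inner)
  ultimately show ?thesis unfolding differentiable_def z case_prod_beta'
    by (auto intro!: exI derivative_eq_intros F)
qed

lemma vfield_derivative_position:
  assumes "(vfield G F l has_derivative D) (at z)"
  shows "fst (snd (D w)) = snd (snd w)"
proof -
  have "((\<lambda>z. fst (snd (vfield G F l z))) has_derivative (\<lambda>w. fst (snd (D w)))) (at z)"
    using assms by (intro has_derivative_fst has_derivative_snd)
  moreover have "(\<lambda>z. fst (snd (vfield G F l z))) = (\<lambda>z. snd (snd z))"
    by (auto simp: vfield_def fun_eq_iff)
  ultimately have "((\<lambda>z. snd (snd z)) has_derivative (\<lambda>w. fst (snd (D w)))) (at z)"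
    by simp
  moreover have "((\<lambda>z::state. snd (snd z)) has_derivative (\<lambda>w. snd (snd w))) (at z)"
    by (intro has_derivative_snd has_derivative_ident)
  ultimately show ?thesis
    by (metis has_derivative_unique)
qed

definition position_inner :: "state \<Rightarrow> state \<Rightarrow> real" where
  "position_inner z w = fst (snd z) \<bullet> fst (snd w)"

lemma bounded_bilinear_position_inner: "bounded_bilinear position_inner"
  unfolding position_inner_def
  by (intro bounded_bilinear.comp[OF bounded_bilinear_inner] bounded_linear_compose[OF bounded_linear_fst]
      bounded_linear_snd)

lemma m_fun_eq: "m_fun a = (\<lambda>z. position_inner z z / 2 - a\<^sup>2 / 2)"
  by (auto simp: m_fun_def position_inner_def fun_eq_iff power2_norm_eq_inner)

lemma m_fun_curvature_bound_function:
  fixes F :: "real \<Rightarrow> real^2"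
  assumes "\<And>t. F differentiable (at t)" and "\<And>t. norm (F t) \<le> M"
    and "0 < a" "a < 1" "0 \<le> l" "l \<le> 1" and "sqrt (1 - a\<^sup>2) * M < G * a\<^sup>2"
  shows "curvature_bound_function Omega (m_fun a) (vfield G F l)"
proof -
  have "\<forall>z\<in>Omega. \<exists>D. (vfield G F l has_derivative D) (at z)"
    using vfield_differentiable[OF assms(1)] by (simp add: differentiable_def)
  then obtain Dv where Dv: "\<And>z. z \<in> Omega \<Longrightarrow> (vfield G F l has_derivative Dv z) (at z)"
    by (metis bchoice)
  show ?thesis
    unfolding m_fun_eq
  proof (rule curvature_bound_function_quadraticI[OF bounded_bilinear_position_inner _ open_Omega Dv])
    fix z assume z: "z \<in> Omega" and level: "position_inner z z / 2 = a\<^sup>2 / 2"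
      and tangent: "position_inner z (vfield G F l z) = 0"
    obtain t x p where z_eq: "z = (t, x, p)" by (cases z)
    have "(norm x)\<^sup>2 = a\<^sup>2"
      using level by (simp add: z_eq position_inner_def power2_norm_eq_inner)
    then have "norm x = a"
      using assms(3) by (simp add: power2_eq_iff_nonneg)
    moreover have "x \<bullet> p = 0"
      using tangent by (simp add: z_eq position_inner_def vfield_def)
    ultimately have "(norm p)\<^sup>2 + x \<bullet> snd (snd (vfield G F l z)) > 0"
      using tangential_curvature_pos[OF _ assms(3,4) _ assms(5,6,2) assms(7)]
      by (simp add: z_eq vfield_def)
    then show "position_inner (vfield G F l z) (vfield G F l z) + position_inner z (Dv z (vfield G F l z)) > 0"
      unfolding position_inner_def vfield_derivative_position[OF Dv[OF z]]
      by (simp add: z_eq vfield_def power2_norm_eq_inner)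
  qed (auto simp: position_inner_def inner_commute)
qed

theorem lemma4p1:
  fixes G T :: real and F :: "real \<Rightarrow> real^2"
  assumes "G > 0" and "T > 0"
    and "\<forall>t. F (t + T) = F t"
    and "\<exists>F'. (\<forall>t. (F has_vector_derivative F' t) (at t)) \<and> continuous_on UNIV F'"
  shows "\<exists>a0\<in>{0<..<1}. \<forall>a. a0 \<le> a \<and> a < 1 \<longrightarrow>
           (\<forall>l\<in>{0..1}. curvature_bound_function Omega (m_fun a) (vfield G F l))"
proof -
  have F_diff: "F differentiable (at t)" for t
    using assms(4) unfolding differentiable_def has_vector_derivative_def by blast
  then have "continuous_on UNIV F"
    by (simp add: continuous_at_imp_continuous_on differentiable_imp_continuous_within)
  then have "bounded (range F)"
    using periodic_continuous_bounded assms(2,3) by blast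
  then obtain M where M: "\<And>t. norm (F t) \<le> M"
    by (auto simp: bounded_iff)
  obtain a0 where "a0 \<in> {0<..<1}" and a0: "\<And>a. a0 \<le> a \<Longrightarrow> a < 1 \<Longrightarrow> sqrt (1 - a\<^sup>2) * M < G * a\<^sup>2"
    using curvature_threshold[OF assms(1)] by blast
  then show ?thesis
    using m_fun_curvature_bound_function[OF F_diff M] by (auto intro!: bexI[of _ a0] a0)
qed

end
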